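(* A countable locally finite group $G$ is finite if and only if $\operatorname{asdim}_{AN}(G,d_G)=0$ for every proper left invariant metric $d_G$ on $G$.
   Context: A group is locally finite if every finitely generated subgroup is finite. A metric $d_G$ on $G$ is proper left invariant if $d_G(gh,gk)=d_G(h,k)$ for all $g,h,k$ and every ball is finite. $\operatorname{asdim}_{AN}(X)=0$ means there are constants $C>0$, $k\in\mathbb{R}$ such that for every $s>0$ each $s$-scale connected component of $X$ (class of the relation "joined by a finite chain $x_0,\dots,x_m$ with $d(x_i,x_{i+1})<s$") has diameter at most $Cs+k$. *)

theory Defs
  imports "HOL-Algebra.Algebra"
begin

definition locally_finite_group :: "('a, 'b) monoid_scheme \<Rightarrow> bool" where
  "locally_finite_group G \<longleftrightarrow>
     (\<forall>S. S \<subseteq> carrier G \<and> finite S \<longrightarrow> finite (generate G S))"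

definition metric_on :: "'a set \<Rightarrow> ('a \<Rightarrow> 'a \<Rightarrow> real) \<Rightarrow> bool" where
  "metric_on A \<rho> \<longleftrightarrow>
     (\<forall>x\<in>A. \<forall>y\<in>A. \<rho> x y \<ge> 0 \<and> (\<rho> x y = 0 \<longleftrightarrow> x = y) \<and> \<rho> x y = \<rho> y x) \<and>
     (\<forall>x\<in>A. \<forall>y\<in>A. \<forall>z\<in>A. \<rho> x z \<le> \<rho> x y + \<rho> y z)"

definition proper_left_invariant_metric ::
  "('a, 'b) monoid_scheme \<Rightarrow> ('a \<Rightarrow> 'a \<Rightarrow> real) \<Rightarrow> bool" where
  "proper_left_invariant_metric G \<rho> \<longleftrightarrow>
     metric_on (carrier G) \<rho> \<and>
     (\<forall>g\<in>carrier G. \<forall>h\<in>carrier G. \<forall>k\<in>carrier G.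
        \<rho> (g \<otimes>\<^bsub>G\<^esub> h) (g \<otimes>\<^bsub>G\<^esub> k) = \<rho> h k) \<and>
     (\<forall>x\<in>carrier G. \<forall>r::real. finite {y \<in> carrier G. \<rho> x y \<le> r})"

definition scale_connected :: "'a set \<Rightarrow> ('a \<Rightarrow> 'a \<Rightarrow> real) \<Rightarrow> real \<Rightarrow> 'a \<Rightarrow> 'a \<Rightarrow> bool" where
  "scale_connected A \<rho> s x y \<longleftrightarrow>
     x \<in> A \<and> (\<lambda>a b. a \<in> A \<and> b \<in> A \<and> \<rho> a b < s)\<^sup>*\<^sup>* x y"

definition asdim_AN_zero :: "'a set \<Rightarrow> ('a \<Rightarrow> 'a \<Rightarrow> real) \<Rightarrow> bool" where
  "asdim_AN_zero A \<rho> \<longleftrightarrow>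
     (\<exists>C::real. \<exists>k::real. C > 0 \<and>
        (\<forall>s>0. \<forall>x y. scale_connected A \<rho> s x y \<longrightarrow> \<rho> x y \<le> C * s + k))"

end

theory Submission
  imports Defs "HOL-Library.Countable_Set"
begin

(* If G is finite, every metric on it has bounded diameter, so asdim_AN = 0 with C = 1 and k the
   diameter.  If G is infinite, we build one bad metric.  Enumerating G, we pick generators
   t_0, t_1, ... with t_n outside the finite subgroup H_n generated by t_0, ..., t_(n-1); the
   chain H_n exhausts G and |H_n| >= 2^n.  Giving t_i a weight w(i) that is constant on the
   blocks [T j, T (j+1)) of a very fast growing tower T, the weighted word length defines a
   proper left invariant metric.  At scale s = T K + 1 the whole subgroup H_n, n = T (K+1), is
   s-connected to the identity, but counting words shows it contains an element of length
   larger than T K (T K + 2) >= C s + k once K >= C, k. *)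


subsection \<open>Finite sets have asymptotic Assouad-Nagata dimension zero\<close>

lemma scale_connected_mem:
  assumes "scale_connected A \<rho> s x y"
  shows "x \<in> A" "y \<in> A"
proof -
  have x: "x \<in> A" and chain: "(\<lambda>a b. a \<in> A \<and> b \<in> A \<and> \<rho> a b < s)\<^sup>*\<^sup>* x y"
    using assms unfolding scale_connected_def by auto
  from chain show "y \<in> A" by (induct rule: rtranclp_induct) (use x in auto)
  show "x \<in> A" by (fact x)
qed

text \<open>On a finite set all distances are bounded by the diameter, which serves as the
  additive constant.\<close>

lemma finite_imp_asdim_AN_zero:
  assumes "finite A"
  shows "asdim_AN_zero A \<rho>"
proof -
  define D where "D = Max (insert 0 (case_prod \<rho> ` (A \<times> A)))"
  have "\<rho> x y \<le> 1 * s + D" if "s > 0" "scale_connected A \<rho> s x y" for s x y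
  proof -
    have "(x, y) \<in> A \<times> A" using scale_connected_mem[OF that(2)] by simp
    hence "\<rho> x y \<le> D" unfolding D_def using assms by (intro Max_ge) force+
    thus ?thesis using that(1) by simp
  qed
  thus ?thesis unfolding asdim_AN_zero_def by (intro exI[of _ 1] exI[of _ D]) auto
qed


subsection \<open>A fast growing tower and block weights\<close>

text \<open>The tower grows so fast that words of weight at most T j (T j + 2) are
  outnumbered by 2 ^ T (j+1).\<close>

fun tower :: "nat \<Rightarrow> nat" where
  "tower 0 = 1"
| "tower (Suc j) = 2 ^ (4 * (tower j * (tower j + 2)))"

lemma tower_less_Suc: "tower j < tower (Suc j)"
proof -
  have "tower j \<le> 4 * (tower j * (tower j + 2))" by simp
  also have "\<dots> < 2 ^ (4 * (tower j * (tower j + 2)))" by (rule less_exp)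
  finally show ?thesis by simp
qed

lemma strict_mono_tower: "strict_mono tower"
  unfolding strict_mono_Suc_iff using tower_less_Suc by blast

declare tower.simps(2) [simp del]

lemma less_tower: "j < tower j"
proof (induct j)
  case (Suc j) then show ?case using tower_less_Suc[of j] by linarith
qed simp

text \<open>Index i lies in block j when T j \<le> i < T (j+1) (block 0 also
  contains the indices below 1); all generators of a block get the weight T j.\<close>

definition block :: "nat \<Rightarrow> nat" where
  "block i = (LEAST j. i < tower (Suc j))"

definition weight :: "nat \<Rightarrow> nat" where
  "weight i = tower (block i)"

lemma less_tower_block: "i < tower (Suc (block i))"
  unfolding block_def by (rule LeastI[of _ i]) (use less_tower[of "Suc i"] in auto)

lemma weight_pos: "0 < weight i"
  unfolding weight_def using less_tower[of "block i"] by simp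

lemma weight_le_tower: "i < tower (Suc j) \<Longrightarrow> weight i \<le> tower j"
  unfolding weight_def block_def
  by (simp add: Least_le strict_mono_less_eq[OF strict_mono_tower])

lemma index_less_tower: "weight i < tower (Suc j) \<Longrightarrow> i < tower (Suc j)"
proof -
  assume "weight i < tower (Suc j)"
  hence "block i \<le> j" unfolding weight_def using strict_mono_less[OF strict_mono_tower] by simp
  hence "tower (Suc (block i)) \<le> tower (Suc j)" by (simp add: strict_mono_less_eq[OF strict_mono_tower])
  thus ?thesis using less_tower_block[of i] by linarith
qed

lemma finite_weight_le: "finite {i. weight i \<le> r}"
proof (rule finite_subset)
  show "{i. weight i \<le> r} \<subseteq> {..<tower (Suc r)}"
    using index_less_tower less_tower[of "Suc r"] by fastforce
qed simp

lemma geometric_sum_le: "(\<Sum>i\<le>R. (a::nat) ^ i) \<le> (a + 1) ^ R"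
proof (induct R)
  case (Suc R)
  have "a * a ^ R \<le> a * (a + 1) ^ R" by (intro mult_le_mono2 power_mono) auto
  moreover have "(\<Sum>i\<le>Suc R. a ^ i) = a * a ^ R + (\<Sum>i\<le>R. a ^ i)" by simp
  ultimately have "(\<Sum>i\<le>Suc R. a ^ i) \<le> a * (a + 1) ^ R + (a + 1) ^ R" using Suc by linarith
  also have "\<dots> = (a + 1) ^ Suc R" by (simp add: algebra_simps)
  finally show ?case .
qed simp

lemma quadratic_less_exp16: "4 * x * x + 2 * (x::nat) < 16 ^ x"
proof (induct x)
  case (Suc x)
  have "(2::nat) ^ x \<le> 16 ^ x" by (rule power_mono) auto
  hence "x + 1 \<le> (16::nat) ^ x" using less_exp[of x] by linarith
  then show ?case using Suc by (simp add: algebra_simps)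
qed simp

text \<open>The counting estimate: with n = T (j+1) and R = T j (T j + 2), the
  words of length at most R over an alphabet of 2n letters are fewer than 2 ^ n.\<close>

lemma word_count_less:
  assumes "n = tower (Suc j)" "R = tower j * (tower j + 2)"
  shows "(\<Sum>i\<le>R. (2 * n) ^ i) < 2 ^ n"
proof -
  have n: "n = 2 ^ (4 * R)" using assms by (simp add: tower.simps(2))
  have "(\<Sum>i\<le>R. (2 * n) ^ i) \<le> (2 * n + 1) ^ R" by (rule geometric_sum_le)
  also have "\<dots> \<le> (2 ^ (4 * R + 2)) ^ R" using n by (intro power_mono) auto
  also have "\<dots> = 2 ^ ((4 * R + 2) * R)" by (rule power_mult[symmetric])
  also have "\<dots> = 2 ^ (4 * R * R + 2 * R)" by (simp add: algebra_simps)
  also have "\<dots> < 2 ^ (16 ^ R)" using quadratic_less_exp16[of R] by simp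
  also have "(16::nat) ^ R = 2 ^ (4 * R)" by (simp add: power_mult)
  finally show ?thesis using n by simp
qed

text \<open>The radius R = T j (T j + 2) lies below T (j+1), so by index_less_tower all letters
  of weight at most R have index below T (j+1).\<close>

lemma radius_less_tower:
  assumes "n = tower (Suc j)" "R = tower j * (tower j + 2)"
  shows "R < n"
proof -
  have "R < 2 ^ R" by (rule less_exp)
  also have "(2::nat) ^ R \<le> 2 ^ (4 * R)" by (rule power_increasing) auto
  finally show ?thesis using assms by (simp add: tower.simps(2))
qed


subsection \<open>The weighted word metric of a weighted generating sequence\<close>

locale weighted_generators = group G for G (structure) +
  fixes gen :: "nat \<Rightarrow> 'a" and wt :: "nat \<Rightarrow> nat"
  assumes gen_carrier: "gen i \<in> carrier G"
    and gen_generates: "carrier G \<subseteq> generate G (range gen)"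
    and wt_pos: "0 < wt i"
    and finite_wt_le: "finite {i. wt i \<le> r}"
begin

definition letter :: "nat \<times> bool \<Rightarrow> 'a" where
  "letter l = (if snd l then gen (fst l) else inv (gen (fst l)))"

definition word_val :: "(nat \<times> bool) list \<Rightarrow> 'a" where
  "word_val xs = foldr (\<lambda>l a. letter l \<otimes> a) xs \<one>"

definition word_wt :: "(nat \<times> bool) list \<Rightarrow> nat" where
  "word_wt xs = (\<Sum>l\<leftarrow>xs. wt (fst l))"

definition inv_word :: "(nat \<times> bool) list \<Rightarrow> (nat \<times> bool) list" where
  "inv_word xs = rev (map (\<lambda>l. (fst l, \<not> snd l)) xs)"

lemma letter_carrier [simp]: "letter l \<in> carrier G"
  unfolding letter_def using gen_carrier by auto

lemma word_val_carrier [simp]: "word_val xs \<in> carrier G"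
  unfolding word_val_def by (induct xs) auto

lemma word_val_Nil [simp]: "word_val [] = \<one>"
  unfolding word_val_def by simp

lemma word_val_Cons [simp]: "word_val (l # xs) = letter l \<otimes> word_val xs"
  unfolding word_val_def by simp

lemma word_val_append: "word_val (xs @ ys) = word_val xs \<otimes> word_val ys"
  by (induct xs) (auto simp: m_assoc)

lemma word_val_inv_word: "word_val (inv_word xs) = inv (word_val xs)"
proof (induct xs)
  case (Cons l xs)
  have "letter (fst l, \<not> snd l) = inv (letter l)"
    unfolding letter_def using gen_carrier by auto
  with Cons show ?case by (simp add: inv_word_def word_val_append inv_mult_group)
qed (simp add: inv_word_def)

lemma word_wt_Nil [simp]: "word_wt [] = 0"
  unfolding word_wt_def by simp

lemma word_wt_Cons [simp]: "word_wt (l # xs) = wt (fst l) + word_wt xs"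
  unfolding word_wt_def by simp

lemma word_wt_append: "word_wt (xs @ ys) = word_wt xs + word_wt ys"
  unfolding word_wt_def by simp

lemma word_wt_inv_word: "word_wt (inv_word xs) = word_wt xs"
  unfolding word_wt_def inv_word_def by (simp add: rev_map[symmetric] o_def)

lemma length_le_word_wt: "length xs \<le> word_wt xs"
proof (induct xs)
  case (Cons l xs) then show ?case using wt_pos[of "fst l"] by simp
qed simp

lemma letter_wt_le_word_wt: "l \<in> set xs \<Longrightarrow> wt (fst l) \<le> word_wt xs"
  by (induct xs) auto

lemma word_of_generate:
  "h \<in> generate G (gen ` I) \<Longrightarrow> \<exists>xs. word_val xs = h \<and> fst ` set xs \<subseteq> I"
proof (induct rule: generate.induct)
  case one
  show ?case by (intro exI[of _ "[]"]) auto
next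
  case (incl h)
  then obtain i where "i \<in> I" "h = gen i" by blast
  thus ?case by (intro exI[of _ "[(i, True)]"]) (auto simp: letter_def gen_carrier)
next
  case (inv h)
  then obtain i where "i \<in> I" "h = gen i" by blast
  thus ?case by (intro exI[of _ "[(i, False)]"]) (auto simp: letter_def gen_carrier)
next
  case (eng h1 h2)
  then obtain xs ys where "word_val xs = h1" "fst ` set xs \<subseteq> I" "word_val ys = h2" "fst ` set ys \<subseteq> I"
    by blast
  thus ?case by (intro exI[of _ "xs @ ys"]) (auto simp: word_val_append)
qed

definition wlen :: "'a \<Rightarrow> nat" where
  "wlen g = (LEAST m. \<exists>xs. word_val xs = g \<and> word_wt xs = m)"

lemma wlen_word: "g \<in> carrier G \<Longrightarrow> \<exists>xs. word_val xs = g \<and> word_wt xs = wlen g"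
  unfolding wlen_def
  by (rule LeastI_ex) (use gen_generates word_of_generate[of _ UNIV] in blast)

lemma wlen_le: "word_val xs = g \<Longrightarrow> wlen g \<le> word_wt xs"
  unfolding wlen_def by (rule Least_le) blast

lemma wlen_zero_iff:
  assumes "g \<in> carrier G"
  shows "wlen g = 0 \<longleftrightarrow> g = \<one>"
proof
  assume "wlen g = 0"
  obtain xs where xs: "word_val xs = g" "word_wt xs = wlen g" using wlen_word[OF assms] by blast
  hence "xs = []" using length_le_word_wt[of xs] \<open>wlen g = 0\<close> by simp
  thus "g = \<one>" using xs(1) by simp
next
  assume "g = \<one>"
  thus "wlen g = 0" using wlen_le[of "[]" g] by simp
qed

lemma wlen_inv_le:
  assumes "g \<in> carrier G"
  shows "wlen (inv g) \<le> wlen g"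
proof -
  obtain xs where xs: "word_val xs = g" "word_wt xs = wlen g" using wlen_word[OF assms] by blast
  have "word_val (inv_word xs) = inv g" using xs(1) by (simp add: word_val_inv_word)
  hence "wlen (inv g) \<le> word_wt (inv_word xs)" by (rule wlen_le)
  thus ?thesis using xs(2) by (simp add: word_wt_inv_word)
qed

lemma wlen_inv:
  assumes "g \<in> carrier G"
  shows "wlen (inv g) = wlen g"
proof (rule antisym)
  show "wlen (inv g) \<le> wlen g" using assms by (rule wlen_inv_le)
  have "wlen (inv (inv g)) \<le> wlen (inv g)" using assms by (intro wlen_inv_le) simp
  thus "wlen g \<le> wlen (inv g)" using assms by simp
qed

lemma wlen_mult:
  assumes "g \<in> carrier G" "h \<in> carrier G"
  shows "wlen (g \<otimes> h) \<le> wlen g + wlen h"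
proof -
  obtain xs where xs: "word_val xs = g" "word_wt xs = wlen g" using wlen_word[OF assms(1)] by blast
  obtain ys where ys: "word_val ys = h" "word_wt ys = wlen h" using wlen_word[OF assms(2)] by blast
  have "word_val (xs @ ys) = g \<otimes> h" using xs ys by (simp add: word_val_append)
  hence "wlen (g \<otimes> h) \<le> word_wt (xs @ ys)" by (rule wlen_le)
  thus ?thesis using xs(2) ys(2) by (simp add: word_wt_append)
qed

definition short_words :: "nat \<Rightarrow> (nat \<times> bool) list set" where
  "short_words R = {xs. set xs \<subseteq> {i. wt i \<le> R} \<times> UNIV \<and> length xs \<le> R}"

lemma finite_short_words: "finite (short_words R)"
  unfolding short_words_def using finite_wt_le by (intro finite_lists_length_le) auto

lemma wlen_ball_subset: "{g \<in> carrier G. wlen g \<le> R} \<subseteq> word_val ` short_words R"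
proof
  fix g assume "g \<in> {g \<in> carrier G. wlen g \<le> R}"
  hence g: "g \<in> carrier G" "wlen g \<le> R" by auto
  then obtain xs where xs: "word_val xs = g" "word_wt xs = wlen g" using wlen_word by blast
  have "xs \<in> short_words R"
    using g xs length_le_word_wt[of xs] letter_wt_le_word_wt[of _ xs]
    unfolding short_words_def by fastforce
  with xs show "g \<in> word_val ` short_words R" by blast
qed

definition wdist :: "'a \<Rightarrow> 'a \<Rightarrow> real" where
  "wdist x y = real (wlen (inv x \<otimes> y))"

lemma wdist_left_invariant:
  "g \<in> carrier G \<Longrightarrow> x \<in> carrier G \<Longrightarrow> y \<in> carrier G \<Longrightarrow> wdist (g \<otimes> x) (g \<otimes> y) = wdist x y"
  unfolding wdist_def by (simp add: inv_mult_group m_assoc[symmetric]) (simp add: m_assoc)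

lemma wdist_metric: "metric_on (carrier G) wdist"
  unfolding metric_on_def
proof (intro conjI ballI)
  fix x y assume x: "x \<in> carrier G" and y: "y \<in> carrier G"
  show "wdist x y \<ge> 0" unfolding wdist_def by simp
  have "inv x \<otimes> y = \<one> \<longleftrightarrow> x = y"
    using x y by (metis inv_equality l_inv_ex inv_inv l_inv)
  thus "wdist x y = 0 \<longleftrightarrow> x = y" unfolding wdist_def using x y by (simp add: wlen_zero_iff)
  have "inv (inv x \<otimes> y) = inv y \<otimes> x" using x y by (simp add: inv_mult_group)
  thus "wdist x y = wdist y x" unfolding wdist_def using wlen_inv[of "inv x \<otimes> y"] x y by simp
next
  fix x y z assume x: "x \<in> carrier G" and y: "y \<in> carrier G" and z: "z \<in> carrier G"
  have "inv x \<otimes> z = (inv x \<otimes> y) \<otimes> (inv y \<otimes> z)" using x y z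
    by (simp add: m_assoc[symmetric]) (simp add: m_assoc)
  thus "wdist x z \<le> wdist x y + wdist y z" unfolding wdist_def
    using wlen_mult[of "inv x \<otimes> y" "inv y \<otimes> z"] x y z by simp
qed

text \<open>Properness: the ball of radius r about x is the left translate by x of a ball about
  the identity, hence lies in the image of the finite set of short words.\<close>

lemma wdist_balls_finite:
  assumes x: "x \<in> carrier G"
  shows "finite {y \<in> carrier G. wdist x y \<le> r}"
proof -
  define R where "R = nat \<lfloor>r\<rfloor>"
  have "{y \<in> carrier G. wdist x y \<le> r} \<subseteq> (\<otimes>) x ` {g \<in> carrier G. wlen g \<le> R}"
  proof
    fix y assume "y \<in> {y \<in> carrier G. wdist x y \<le> r}"
    hence y: "y \<in> carrier G" and "real (wlen (inv x \<otimes> y)) \<le> r" unfolding wdist_def by auto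
    hence "inv x \<otimes> y \<in> {g \<in> carrier G. wlen g \<le> R}" using x unfolding R_def
      by (simp add: le_nat_floor)
    moreover have "y = x \<otimes> (inv x \<otimes> y)" using x y by (simp add: m_assoc[symmetric])
    ultimately show "y \<in> (\<otimes>) x ` {g \<in> carrier G. wlen g \<le> R}" by (rule rev_image_eqI)
  qed
  moreover have "finite {g \<in> carrier G. wlen g \<le> R}"
    using finite_short_words wlen_ball_subset by (rule finite_surj)
  ultimately show ?thesis by (rule finite_subset[OF _ finite_imageI])
qed

theorem wdist_proper_left_invariant: "proper_left_invariant_metric G wdist"
  unfolding proper_left_invariant_metric_def
  using wdist_metric wdist_left_invariant wdist_balls_finite by blast

text \<open>A word whose letters all have weight below s is an s-chain from the identity to its
  value: the partial products differ by single letters.\<close>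

lemma word_scale_connected:
  assumes "\<forall>l\<in>set xs. real (wt (fst l)) < s"
  shows "scale_connected (carrier G) wdist s \<one> (word_val xs)"
proof -
  let ?step = "\<lambda>a b. a \<in> carrier G \<and> b \<in> carrier G \<and> wdist a b < s"
  have translate: "?step\<^sup>*\<^sup>* (g \<otimes> a) (g \<otimes> b)" if "?step\<^sup>*\<^sup>* a b" "g \<in> carrier G" for g a b
    using that(1)
  proof (induct rule: rtranclp_induct)
    case (step b c)
    thus ?case using that(2) wdist_left_invariant
      by (auto intro: rtranclp.rtrancl_into_rtrancl)
  qed simp
  have "?step\<^sup>*\<^sup>* \<one> (word_val xs)"
    using assms
  proof (induct xs)
    case (Cons l xs)
    have "wdist \<one> (letter l) \<le> wt (fst l)"
      unfolding wdist_def using wlen_le[of "[l]"] by simp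
    hence first: "?step \<one> (letter l)" using Cons.prems by simp
    have "?step\<^sup>*\<^sup>* (letter l \<otimes> \<one>) (letter l \<otimes> word_val xs)"
      using Cons by (intro translate) auto
    hence "?step\<^sup>*\<^sup>* (letter l) (word_val (l # xs))" by simp
    with first show ?case by (rule converse_rtranclp_into_rtranclp)
  qed simp
  thus ?thesis unfolding scale_connected_def by simp
qed

end


subsection \<open>A generating chain in an infinite countable locally finite group\<close>

locale infinite_lf_group = group G for G (structure) +
  assumes countable_carrier: "countable (carrier G)"
    and infinite_carrier: "infinite (carrier G)"
    and locally_finite: "locally_finite_group G"
begin

definition enum :: "nat \<Rightarrow> 'a" where
  "enum = from_nat_into (carrier G)"

lemma enum_carrier: "enum k \<in> carrier G"
  unfolding enum_def by (rule from_nat_into) (use infinite_carrier in auto)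

lemma enum_surj: "g \<in> carrier G \<Longrightarrow> \<exists>k. enum k = g"
  unfolding enum_def using from_nat_into_surj[OF countable_carrier] by blast

definition next_gen :: "'a set \<Rightarrow> 'a" where
  "next_gen S = enum (LEAST k. enum k \<notin> generate G S)"

primrec gens_upto :: "nat \<Rightarrow> 'a set" where
  "gens_upto 0 = {}"
| "gens_upto (Suc n) = insert (next_gen (gens_upto n)) (gens_upto n)"

definition gen :: "nat \<Rightarrow> 'a" where
  "gen n = next_gen (gens_upto n)"

definition chain :: "nat \<Rightarrow> 'a set" where
  "chain n = generate G (gens_upto n)"

lemma gens_upto_eq: "gens_upto n = gen ` {..<n}"
  by (induct n) (auto simp: gen_def lessThan_Suc)

lemma gen_carrier: "gen n \<in> carrier G"
  unfolding gen_def next_gen_def by (rule enum_carrier)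

lemma gens_upto_carrier: "gens_upto n \<subseteq> carrier G"
  using gens_upto_eq gen_carrier by auto

lemma chain_subgroup: "subgroup (chain n) G"
  unfolding chain_def by (rule generate_is_subgroup[OF gens_upto_carrier])

lemma chain_carrier: "chain n \<subseteq> carrier G"
  using subgroup.subset[OF chain_subgroup] .

lemma finite_chain: "finite (chain n)"
  using locally_finite gens_upto_carrier
  unfolding locally_finite_group_def chain_def gens_upto_eq by auto

lemma gen_notin_chain: "gen n \<notin> chain n"
proof -
  have "chain n \<noteq> carrier G" using finite_chain infinite_carrier by metis
  then obtain g where g: "g \<in> carrier G" "g \<notin> chain n" using chain_carrier by blast
  then obtain k where "enum k = g" using enum_surj by blast
  hence "enum k \<notin> chain n" using g by blast
  hence "enum (LEAST k. enum k \<notin> chain n) \<notin> chain n" by (rule LeastI)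
  thus ?thesis unfolding gen_def next_gen_def chain_def .
qed

lemma gen_in_chain: "m < n \<Longrightarrow> gen m \<in> chain n"
  unfolding chain_def gens_upto_eq by (rule generate.incl) auto

lemma chain_mono: "chain n \<subseteq> chain (Suc n)"
  unfolding chain_def by (rule mono_generate) auto

text \<open>Each step at least doubles the subgroup: the coset gen n \<otimes> chain n is
  disjoint from chain n and lies in chain (n+1).\<close>

lemma card_chain_double: "2 * card (chain n) \<le> card (chain (Suc n))"
proof -
  let ?H = "chain n" and ?t = "gen n"
  let ?tH = "(\<otimes>) ?t ` ?H"
  interpret H: subgroup ?H G by (rule chain_subgroup)
  have "?tH \<subseteq> chain (Suc n)"
    using chain_mono gen_in_chain[of n "Suc n"] subgroup.m_closed[OF chain_subgroup] by blast
  moreover have "?tH \<inter> ?H = {}"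
  proof (rule ccontr)
    assume "?tH \<inter> ?H \<noteq> {}"
    then obtain h where h: "h \<in> ?H" "?t \<otimes> h \<in> ?H" by blast
    have "?t = (?t \<otimes> h) \<otimes> inv h" using h H.subset gen_carrier by (simp add: m_assoc)
    also have "\<dots> \<in> ?H" using h by blast
    finally show False using gen_notin_chain by blast
  qed
  moreover have "card ?tH = card ?H"
    using gen_carrier H.subset by (intro card_image inj_onI) (meson l_cancel subsetD)
  ultimately have "card (?H \<union> ?tH) = 2 * card ?H" "?H \<union> ?tH \<subseteq> chain (Suc n)"
    using finite_chain chain_mono by (auto simp: card_Un_disjoint Int_commute)
  thus ?thesis using finite_chain card_mono by metis
qed

lemma card_chain: "2 ^ n \<le> card (chain n)"
proof (induct n)
  case 0
  have "chain 0 = {\<one>}" unfolding chain_def by (simp add: generate_empty)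
  then show ?case by simp
next
  case (Suc n) then show ?case using card_chain_double[of n] by simp
qed

lemma inj_gen: "inj gen"
proof (rule injI)
  fix m n assume eq: "gen m = gen n"
  show "m = n"
  proof (rule ccontr)
    assume "m \<noteq> n"
    hence "m < n \<or> n < m" by arith
    thus False using eq gen_in_chain gen_notin_chain by metis
  qed
qed

text \<open>The chain exhausts G: an element outside all of it would be a lower bound in the
  enumeration for all the (distinct) generators.\<close>

lemma chain_exhausts: "g \<in> carrier G \<Longrightarrow> \<exists>n. g \<in> chain n"
proof (rule ccontr)
  assume g: "g \<in> carrier G" and outside: "\<nexists>n. g \<in> chain n"
  obtain k where k: "enum k = g" using enum_surj g by blast
  have "gen n \<in> enum ` {..k}" for n
  proof -
    have "(LEAST k. enum k \<notin> chain n) \<le> k" using outside k by (intro Least_le) auto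
    thus ?thesis unfolding gen_def next_gen_def chain_def by auto
  qed
  hence "range gen \<subseteq> enum ` {..k}" by blast
  hence "finite (range gen)" using finite_subset by blast
  thus False using inj_gen finite_imageD by blast
qed

lemma gen_generates: "carrier G \<subseteq> generate G (range gen)"
proof
  fix g assume "g \<in> carrier G"
  then obtain n where "g \<in> chain n" using chain_exhausts by blast
  moreover have "chain n \<subseteq> generate G (range gen)"
    unfolding chain_def gens_upto_eq by (rule mono_generate) auto
  ultimately show "g \<in> generate G (range gen)" by blast
qed

end


subsection \<open>An infinite countable locally finite group has positive dimension\<close>

sublocale infinite_lf_group \<subseteq> weighted_generators G gen weight
  using gen_carrier gen_generates weight_pos finite_weight_le
  by unfold_locales auto

context infinite_lf_group
begin

text \<open>At scale T K + 1 the subgroup chain (T (K+1)) is connected to the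
  identity, since all its generators have weight at most T K.\<close>

lemma chain_scale_connected:
  assumes "g \<in> chain (tower (Suc K))"
  shows "scale_connected (carrier G) wdist (real (tower K) + 1) \<one> g"
proof -
  obtain xs where xs: "word_val xs = g" "fst ` set xs \<subseteq> {..<tower (Suc K)}"
    using word_of_generate assms unfolding chain_def gens_upto_eq by blast
  have "\<forall>l\<in>set xs. real (weight (fst l)) < real (tower K) + 1"
    using xs(2) weight_le_tower by fastforce
  thus ?thesis using word_scale_connected xs(1) by blast
qed

lemma chain_has_long_element:
  "\<exists>g \<in> chain (tower (Suc K)). tower K * (tower K + 2) < wlen g"
proof (rule ccontr)
  define n where "n = tower (Suc K)"
  define R where "R = tower K * (tower K + 2)"
  define alphabet where "alphabet = {..<n} \<times> (UNIV :: bool set)"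
  assume "\<not> ?thesis"
  hence "chain n \<subseteq> {g \<in> carrier G. wlen g \<le> R}"
    using chain_carrier unfolding n_def R_def by fastforce
  also have "\<dots> \<subseteq> word_val ` short_words R" by (rule wlen_ball_subset)
  finally have "card (chain n) \<le> card (word_val ` short_words R)"
    using finite_short_words by (intro card_mono) auto
  also have "\<dots> \<le> card (short_words R)" using finite_short_words by (rule card_image_le)
  also have "\<dots> \<le> card {xs. set xs \<subseteq> alphabet \<and> length xs \<le> R}"
  proof (rule card_mono)
    show "finite {xs. set xs \<subseteq> alphabet \<and> length xs \<le> R}"
      unfolding alphabet_def by (intro finite_lists_length_le) auto
    show "short_words R \<subseteq> {xs. set xs \<subseteq> alphabet \<and> length xs \<le> R}"
      using index_less_tower radius_less_tower[OF n_def R_def]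
      unfolding short_words_def alphabet_def n_def by fastforce
  qed
  also have "\<dots> = (\<Sum>i\<le>R. (2 * n) ^ i)"
  proof -
    have "finite alphabet" "card alphabet = 2 * n" unfolding alphabet_def by (simp_all add: card_cartesian_product)
    thus ?thesis using card_lists_length_le[of alphabet R] by simp
  qed
  also have "\<dots> < 2 ^ n" by (rule word_count_less[OF n_def R_def])
  also have "\<dots> \<le> card (chain n)" by (rule card_chain)
  finally show False by simp
qed

theorem not_asdim_AN_zero: "\<not> asdim_AN_zero (carrier G) wdist"
proof
  assume "asdim_AN_zero (carrier G) wdist"
  then obtain C k :: real where
    bound: "\<And>s x y. s > 0 \<Longrightarrow> scale_connected (carrier G) wdist s x y \<Longrightarrow> wdist x y \<le> C * s + k"
    unfolding asdim_AN_zero_def by blast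
  define K where "K = nat \<lceil>max C k\<rceil>"
  define c where "c = real (tower K)"
  have "K \<le> tower K" using less_tower[of K] by simp
  hence CK: "C \<le> real K" "k \<le> real K" "real K \<le> c"
    unfolding K_def c_def by linarith+
  obtain g where g: "g \<in> chain (tower (Suc K))" "tower K * (tower K + 2) < wlen g"
    using chain_has_long_element by blast
  have "wdist \<one> g \<le> C * (c + 1) + k"
    using bound chain_scale_connected[OF g(1)] unfolding c_def by simp
  also have "\<dots> \<le> real K * (c + 1) + real K"
    using CK by (intro add_mono mult_right_mono) auto
  also have "\<dots> = real K * (c + 2)" by (simp add: algebra_simps)
  also have "\<dots> \<le> c * (c + 2)" using CK by (simp add: c_def mult_right_mono)
  also have "\<dots> = real (tower K * (tower K + 2))" unfolding c_def by (simp add: algebra_simps)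
  also have "\<dots> < real (wlen g)" using g(2) by (simp only: of_nat_less_iff)
  also have "\<dots> = wdist \<one> g" unfolding wdist_def using subsetD[OF chain_carrier g(1)] by simp
  finally show False by simp
qed

end


theorem mainTheorem12:
  fixes G :: "('a, 'b) monoid_scheme"
  assumes "group G"
    and "countable (carrier G)"
    and "locally_finite_group G"
  shows "finite (carrier G) \<longleftrightarrow>
    (\<forall>\<rho>. proper_left_invariant_metric G \<rho> \<longrightarrow> asdim_AN_zero (carrier G) \<rho>)"
proof
  assume "finite (carrier G)"
  thus "\<forall>\<rho>. proper_left_invariant_metric G \<rho> \<longrightarrow> asdim_AN_zero (carrier G) \<rho>"
    using finite_imp_asdim_AN_zero by blast
next
  assume all_zero: "\<forall>\<rho>. proper_left_invariant_metric G \<rho> \<longrightarrow> asdim_AN_zero (carrier G) \<rho>"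
  show "finite (carrier G)"
  proof (rule ccontr)
    assume "infinite (carrier G)"
    with assms interpret infinite_lf_group G
      by (simp add: infinite_lf_group_def infinite_lf_group_axioms_def)
    show False
      using all_zero wdist_proper_left_invariant not_asdim_AN_zero by blast
  qed
qed

end
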